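(* Let $p\geq 7$ be a prime and let $M$ be the $p\times p$ tridiagonal matrix with diagonal entries $M_{11}=M_{pp}=p-1$ and $M_{ii}=p-2$ for $2\leq i\leq p-1$, entries $M_{i,i+1}=M_{i+1,i}=1$ for $1\leq i\leq p-1$, and all other entries $0$. Let $x_1,\dots,x_p$ be non-negative integers satisfying $M(x_1,\ldots,x_p)^t\leq (p-1)!\,\mathbf{1}$ (entrywise, $\mathbf{1}$ the all-ones vector), and let $x_{\max}=\max\{x_i:1\leq i\leq p\}$. Then: (1) $|\{i\in[p] : x_i\leq \frac{(p-1)!}{p}\}|\geq \lceil \frac{p}{3}\rceil$; (2) if $\sum_{i=1}^p x_i=(p-1)!-k$, then $|\{i : x_i=x_{\max}\}|\geq p-k-2$; (3) $\sum_{i=1}^p x_i\leq (p-1)!-\lceil\frac{p}{3}\rceil+2$. *)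

theory Defs
  imports Complex_Main "HOL-Computational_Algebra.Primes"
begin

definition tridiagM :: "nat \<Rightarrow> nat \<Rightarrow> nat \<Rightarrow> int" where
  "tridiagM p i j =
     (if i = j then (if i = 1 \<or> i = p then int p - 1 else int p - 2)
      else if j = i + 1 \<or> i = j + 1 then 1 else 0)"

end

(*
  By Wilson's theorem (p-1)! = pK - 1 for an integer K, and every row of M sums to p, so
  w = K - x (entrywise) is an integer vector with M w >= 1. In terms of w, x_i <= (p-1)!/p
  means w_i > 0, the sum of the x_i is (p-1)! + 1 - sum w, and the maximisers of x are the
  minimisers of w.

  Row i of M w >= 1 forces a positive entry among w_(i-1), w_i, w_(i+1), so at least p/3
  entries are positive. A negative entry w_i must be paid for by its neighbours:
  (p-2)|w_i| + 1 <= w_(i-1)^+ + w_(i+1)^+. Summing gives (p-2) N <= 2 P for the negative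
  mass N and positive mass P, hence (p-4) P <= (p-2) sum w. With P >= p/3 this yields
  3 sum w >= p - 2; and a negative entry forces P >= p, hence sum w >= p - 2, which is what
  part (2) needs when the minimum of w is negative.
*)
theory Submission
  imports Defs "HOL-Number_Theory.Residues"
begin

lemma tridiagM_row_expand:
  assumes "i \<in> {1..p}"
  shows "(\<Sum>j\<in>{1..p}. tridiagM p i j * f j) =
    tridiagM p i i * f i + (if 2 \<le> i then f (i - 1) else 0) + (if i < p then f (i + 1) else 0)"
proof -
  have "(\<Sum>j\<in>{1..p}. tridiagM p i j * f j) =
      (\<Sum>j\<in>{1..p}. (if j = i then tridiagM p i i * f i else 0)
        + (if j = i - 1 \<and> 2 \<le> i then f (i - 1) else 0) + (if j = i + 1 then f (i + 1) else 0))"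
    using assms by (intro sum.cong) (auto simp: tridiagM_def)
  also have "\<dots> = tridiagM p i i * f i + (if 2 \<le> i then f (i - 1) else 0)
      + (if i < p then f (i + 1) else 0)"
    using assms by (auto simp: sum.distrib)
  finally show ?thesis .
qed

lemma tridiagM_row_sum:
  assumes "2 \<le> p" "i \<in> {1..p}"
  shows "(\<Sum>j\<in>{1..p}. tridiagM p i j) = int p"
  using tridiagM_row_expand[OF assms(2), of "\<lambda>_. 1"] assms by (auto simp: tridiagM_def)

locale tridiag_supersolution =
  fixes p :: nat and w :: "nat \<Rightarrow> int"
  assumes p_ge_2: "2 \<le> p"
    and supersolution: "\<And>i. i \<in> {1..p} \<Longrightarrow> 1 \<le> (\<Sum>j\<in>{1..p}. tridiagM p i j * w j)"
begin

lemma row_ge_one: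
  assumes "i \<in> {1..p}"
  shows "1 \<le> tridiagM p i i * w i + (if 2 \<le> i then w (i - 1) else 0) + (if i < p then w (i + 1) else 0)"
  using supersolution[OF assms] by (simp only: tridiagM_row_expand[OF assms])

lemma exists_positive_near:
  assumes "i \<in> {1..p}"
  obtains a where "a \<in> {1..p}" "0 < w a" "i \<in> {a - 1..a + 1}"
proof -
  have "tridiagM p i i * w i \<le> 0" if "w i \<le> 0"
    using p_ge_2 that by (simp add: tridiagM_def mult_nonneg_nonpos)
  then have "0 < w i \<or> (2 \<le> i \<and> 0 < w (i - 1)) \<or> (i < p \<and> 0 < w (i + 1))"
    using row_ge_one[OF assms] by (cases "w i \<le> 0") (auto split: if_splits)
  then consider "0 < w i" | "2 \<le> i" "0 < w (i - 1)" | "i < p" "0 < w (i + 1)"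
    by blast
  then show ?thesis
  proof cases
    case 1
    with assms show ?thesis by (intro that[of i]) auto
  next
    case 2
    with assms show ?thesis by (intro that[of "i - 1"]) auto
  next
    case 3
    with assms show ?thesis by (intro that[of "i + 1"]) auto
  qed
qed

lemma card_positive_ge: "p \<le> 3 * card {i\<in>{1..p}. 0 < w i}"
proof -
  let ?A = "{i\<in>{1..p}. 0 < w i}"
  have "{1..p} \<subseteq> (\<Union>a\<in>?A. {a - 1..a + 1})"
  proof
    fix i assume "i \<in> {1..p}"
    then obtain a where "a \<in> {1..p}" "0 < w a" "i \<in> {a - 1..a + 1}"
      by (rule exists_positive_near)
    then show "i \<in> (\<Union>a\<in>?A. {a - 1..a + 1})" by blast
  qed
  then have "p \<le> card (\<Union>a\<in>?A. {a - 1..a + 1})"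
    using card_mono[of "\<Union>a\<in>?A. {a - 1..a + 1}" "{1..p}"] by simp
  also have "\<dots> \<le> (\<Sum>a\<in>?A. card {a - 1..a + 1})"
    by (intro card_UN_le) auto
  also have "\<dots> = 3 * card ?A"
    by (simp add: Suc_diff_le)
  finally show ?thesis .
qed

definition pos_part :: "nat \<Rightarrow> int" where
  "pos_part j = (if j \<in> {1..p} then max 0 (w j) else 0)"

definition pos_mass :: int where
  "pos_mass = (\<Sum>i\<in>{1..p}. max 0 (w i))"

definition neg_mass :: int where
  "neg_mass = (\<Sum>i\<in>{1..p}. max 0 (- w i))"

lemma sum_eq_pos_mass_minus_neg_mass: "(\<Sum>i\<in>{1..p}. w i) = pos_mass - neg_mass"
  unfolding pos_mass_def neg_mass_def sum_subtractf[symmetric] by (intro sum.cong) auto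

lemma sum_pos_part_le_pos_mass:
  assumes "finite B"
  shows "(\<Sum>j\<in>B. pos_part j) \<le> pos_mass"
proof -
  have "(\<Sum>j\<in>B. pos_part j) = (\<Sum>j\<in>B \<inter> {1..p}. pos_part j)"
    using assms by (intro sum.mono_neutral_right) (auto simp: pos_part_def)
  also have "\<dots> \<le> (\<Sum>j\<in>{1..p}. pos_part j)"
    by (intro sum_mono2) (auto simp: pos_part_def)
  also have "\<dots> = pos_mass"
    unfolding pos_mass_def pos_part_def by simp
  finally show ?thesis .
qed

lemma card_positive_le_pos_mass: "int (card {i\<in>{1..p}. 0 < w i}) \<le> pos_mass"
proof -
  have "{1..p} \<inter> {i. 0 < w i} = {i\<in>{1..p}. 0 < w i}"
    by blast
  then have "int (card {i\<in>{1..p}. 0 < w i}) = (\<Sum>i\<in>{1..p}. of_bool (0 < w i))"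
    by simp
  also have "\<dots> \<le> pos_mass"
    unfolding pos_mass_def by (intro sum_mono) auto
  finally show ?thesis .
qed

lemma negative_entry_compensated:
  assumes "i \<in> {1..p}" "w i < 0"
  shows "(int p - 2) * (- w i) + 1 \<le> pos_part (i - 1) + pos_part (i + 1)"
proof -
  have "int p - 2 \<le> tridiagM p i i"
    by (simp add: tridiagM_def)
  then have "tridiagM p i i * w i \<le> (int p - 2) * w i"
    using assms(2) by (intro mult_right_mono_neg) auto
  moreover have "(if 2 \<le> i then w (i - 1) else 0) \<le> pos_part (i - 1)"
    "(if i < p then w (i + 1) else 0) \<le> pos_part (i + 1)"
    using assms(1) by (auto simp: pos_part_def)
  ultimately show ?thesis
    using row_ge_one[OF assms(1)] by (simp add: algebra_simps)
qed

lemma neg_mass_le: "(int p - 2) * neg_mass \<le> 2 * pos_mass"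
proof -
  have "(int p - 2) * neg_mass = (\<Sum>i\<in>{1..p}. (int p - 2) * max 0 (- w i))"
    by (simp add: neg_mass_def sum_distrib_left)
  also have "\<dots> \<le> (\<Sum>i\<in>{1..p}. pos_part (i - 1) + pos_part (i + 1))"
  proof (intro sum_mono)
    fix i assume "i \<in> {1..p}"
    then show "(int p - 2) * max 0 (- w i) \<le> pos_part (i - 1) + pos_part (i + 1)"
      using negative_entry_compensated[of i] by (cases "w i < 0") (auto simp: pos_part_def)
  qed
  also have "\<dots> = (\<Sum>j\<in>(\<lambda>i. i - 1) ` {1..p}. pos_part j) + (\<Sum>j\<in>(\<lambda>i. i + 1) ` {1..p}. pos_part j)"
    unfolding sum.distrib
    by (intro arg_cong2[where f = "(+)"] sum.reindex_cong[symmetric]) (auto simp: inj_on_def)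
  also have "\<dots> \<le> 2 * pos_mass"
    using sum_pos_part_le_pos_mass[of "(\<lambda>i. i - 1) ` {1..p}"]
      sum_pos_part_le_pos_mass[of "(\<lambda>i. i + 1) ` {1..p}"] by simp
  finally show ?thesis .
qed

lemma pos_mass_bounds_sum: "(int p - 4) * pos_mass \<le> (int p - 2) * (\<Sum>i\<in>{1..p}. w i)"
proof -
  have "(int p - 2) * (\<Sum>i\<in>{1..p}. w i) = (int p - 2) * pos_mass - (int p - 2) * neg_mass"
    unfolding sum_eq_pos_mass_minus_neg_mass by (rule right_diff_distrib)
  with neg_mass_le show ?thesis
    by (simp add: algebra_simps)
qed

lemma sum_gt_if_pos_mass_ge:
  assumes "7 \<le> p" "0 < c" "int p \<le> c * pos_mass"
  shows "int p - 3 < c * (\<Sum>i\<in>{1..p}. w i)"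
proof -
  have "(int p - 2) * (int p - 3) < (int p - 4) * int p"
    using assms(1) by (simp add: algebra_simps)
  also have "\<dots> \<le> (int p - 4) * (c * pos_mass)"
    using assms by (intro mult_left_mono) auto
  also have "\<dots> = c * ((int p - 4) * pos_mass)"
    by (simp add: algebra_simps)
  also have "\<dots> \<le> c * ((int p - 2) * (\<Sum>i\<in>{1..p}. w i))"
    using assms(2) pos_mass_bounds_sum by (intro mult_left_mono) auto
  also have "\<dots> = (int p - 2) * (c * (\<Sum>i\<in>{1..p}. w i))"
    by (simp add: algebra_simps)
  finally show ?thesis
    using assms(1) by (simp add: mult_less_cancel_left_pos)
qed

lemma sum_ge_third: "7 \<le> p \<Longrightarrow> int p \<le> 3 * (\<Sum>i\<in>{1..p}. w i) + 2"
  using sum_gt_if_pos_mass_ge[of 3] card_positive_ge card_positive_le_pos_mass by linarith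

lemma pos_mass_ge_if_negative:
  assumes "6 \<le> p" "j \<in> {1..p}" "w j < 0"
  shows "int p \<le> pos_mass"
proof -
  obtain a where a: "a \<in> {1..p}" "0 < w a" "a \<noteq> j - 1" "a \<noteq> j + 1"
  proof (cases "4 \<le> j")
    case True
    obtain a where "a \<in> {1..p}" "0 < w a" "1 \<in> {a - 1..a + 1}"
      by (rule exists_positive_near[of 1]) (use p_ge_2 in auto)
    with True show ?thesis by (intro that[of a]) auto
  next
    case False
    obtain a where "a \<in> {1..p}" "0 < w a" "p \<in> {a - 1..a + 1}"
      by (rule exists_positive_near[of p]) (use p_ge_2 in auto)
    with False assms(1) show ?thesis by (intro that[of a]) auto
  qed
  have "int p - 2 \<le> (int p - 2) * (- w j)"
    using mult_left_mono[of 1 "- w j" "int p - 2"] assms by simp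
  then have "int p - 1 \<le> pos_part (j - 1) + pos_part (j + 1)"
    using negative_entry_compensated[OF assms(2,3)] by linarith
  also have "\<dots> + pos_part a = (\<Sum>i\<in>{j - 1, j + 1, a}. pos_part i)"
    using a(3,4) assms(2) by auto
  also have "\<dots> \<le> pos_mass"
    by (intro sum_pos_part_le_pos_mass) simp
  finally show ?thesis
    using a(1,2) by (simp add: pos_part_def)
qed

lemma card_minimizers_ge:
  assumes "7 \<le> p"
  shows "int p \<le> (\<Sum>i\<in>{1..p}. w i) + 1 + int (card {i\<in>{1..p}. \<forall>j\<in>{1..p}. w i \<le> w j})"
proof -
  have "Min (w ` {1..p}) \<in> w ` {1..p}"
    using p_ge_2 by (intro Min_in) auto
  then obtain i0 where i0: "i0 \<in> {1..p}" "\<forall>j\<in>{1..p}. w i0 \<le> w j"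
    by (metis Min_le finite_atLeastAtMost finite_imageI image_iff)
  let ?m = "w i0"
  have minimizers: "{i\<in>{1..p}. \<forall>j\<in>{1..p}. w i \<le> w j} = {i\<in>{1..p}. w i = ?m}"
    using i0 by force
  consider "0 < ?m" | "?m = 0" | "?m < 0" by linarith
  then show ?thesis
  proof cases
    case 1
    then have "(\<Sum>i\<in>{1..p}. 1) \<le> (\<Sum>i\<in>{1..p}. w i)"
      using i0(2) by (intro sum_mono) force
    then show ?thesis by simp
  next
    case 2
    have "neg_mass = 0"
      unfolding neg_mass_def using i0(2) 2 by (intro sum.neutral) force
    let ?Z = "{i\<in>{1..p}. w i = ?m}" and ?P = "{i\<in>{1..p}. 0 < w i}"
    have "{1..p} = ?Z \<union> ?P"
      using i0(2) 2 by force
    moreover have "card (?Z \<union> ?P) = card ?Z + card ?P"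
      using 2 by (intro card_Un_disjoint) auto
    ultimately have "p = card ?Z + card ?P"
      by (metis card_atLeastAtMost diff_Suc_1)
    then show ?thesis
      using minimizers card_positive_le_pos_mass sum_eq_pos_mass_minus_neg_mass \<open>neg_mass = 0\<close>
      by simp
  next
    case 3
    have "int p - 3 < (\<Sum>i\<in>{1..p}. w i)"
      using sum_gt_if_pos_mass_ge[of 1] pos_mass_ge_if_negative[OF _ i0(1) 3] assms by simp
    moreover have "0 < card {i\<in>{1..p}. w i = ?m}"
      using i0(1) by (subst card_gt_0_iff) auto
    ultimately show ?thesis
      using minimizers by simp
  qed
qed

end

lemma tridiag_supersolution_complement:
  fixes x :: "nat \<Rightarrow> int"
  assumes "2 \<le> p" "\<forall>i\<in>{1..p}. (\<Sum>j\<in>{1..p}. tridiagM p i j * x j) \<le> int p * K - 1"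
  shows "tridiag_supersolution p (\<lambda>j. K - x j)"
proof
  fix i assume i: "i \<in> {1..p}"
  have "(\<Sum>j\<in>{1..p}. tridiagM p i j * (K - x j))
      = K * (\<Sum>j\<in>{1..p}. tridiagM p i j) - (\<Sum>j\<in>{1..p}. tridiagM p i j * x j)"
    by (simp add: right_diff_distrib sum_subtractf sum_distrib_left mult.commute)
  also have "\<dots> = int p * K - (\<Sum>j\<in>{1..p}. tridiagM p i j * x j)"
    unfolding tridiagM_row_sum[OF assms(1) i] by simp
  finally show "1 \<le> (\<Sum>j\<in>{1..p}. tridiagM p i j * (K - x j))"
    using assms(2)[rule_format, OF i] by linarith
qed (use assms in simp)

lemma of_nat_le_divide_iff_less:
  fixes p K x :: nat
  assumes "0 < p"
  shows "real x \<le> (real (p * K) - 1) / real p \<longleftrightarrow> x < K"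
proof -
  have "real x \<le> (real (p * K) - 1) / real p \<longleftrightarrow> real (p * x) \<le> real (p * K) - 1"
    using assms by (simp add: pos_le_divide_eq mult.commute)
  also have "\<dots> \<longleftrightarrow> p * x < p * K"
    by linarith
  finally show ?thesis
    using assms by simp
qed

lemma fact_pred_eq_mult_minus_one:
  assumes "prime p"
  obtains K :: nat where "fact (p - 1) = int p * int K - 1"
proof -
  have "int p dvd fact (p - 1) + 1"
    using wilson_theorem[OF assms] by (simp add: cong_iff_dvd_diff)
  then obtain K where "fact (p - 1) + 1 = int p * K"
    by blast
  moreover from this have "0 < int p * K"
    using fact_ge_zero[of "p - 1", where 'a = int] by linarith
  then have "0 \<le> K"
    using prime_gt_0_nat[OF assms] by (simp add: zero_less_mult_iff)
  ultimately show ?thesis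
    by (intro that[of "nat K"]) (simp add: algebra_simps)
qed

theorem theorem3p4:
  fixes p :: nat and x :: "nat \<Rightarrow> nat"
  assumes "prime p" and "p \<ge> 7"
    and "\<forall>i\<in>{1..p}. (\<Sum>j\<in>{1..p}. tridiagM p i j * int (x j)) \<le> int (fact (p - 1))"
  shows "int (card {i\<in>{1..p}. real (x i) \<le> fact (p - 1) / real p}) \<ge> \<lceil>real p / 3\<rceil>
    \<and> (\<forall>k::int. int (\<Sum>i\<in>{1..p}. x i) = int (fact (p - 1)) - k \<longrightarrow>
          int (card {i\<in>{1..p}. x i = Max (x ` {1..p})}) \<ge> int p - k - 2)
    \<and> int (\<Sum>i\<in>{1..p}. x i) \<le> int (fact (p - 1)) - \<lceil>real p / 3\<rceil> + 2"
proof -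
  obtain K where K: "fact (p - 1) = int p * int K - 1"
    using fact_pred_eq_mult_minus_one[OF assms(1)] .
  define w where "w i = int K - int (x i)" for i
  interpret tridiag_supersolution p w
    unfolding w_def using assms K by (intro tridiag_supersolution_complement) simp_all
  define S where "S = (\<Sum>i\<in>{1..p}. w i)"
  have sum_x: "int (\<Sum>i\<in>{1..p}. x i) = int p * int K - S"
    by (simp add: S_def w_def sum_subtractf)
  have "real (x i) \<le> fact (p - 1) / real p \<longleftrightarrow> 0 < w i" for i
    using of_nat_le_divide_iff_less[where p = p and K = K and x = "x i"]
      arg_cong[OF K, of real_of_int] assms(2)
    by (simp add: w_def)
  then have part1: "\<lceil>real p / 3\<rceil> \<le> int (card {i\<in>{1..p}. real (x i) \<le> fact (p - 1) / real p})"
    using card_positive_ge by (simp add: ceiling_le_iff)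
  have "x i = Max (x ` {1..p}) \<longleftrightarrow> (\<forall>j\<in>{1..p}. w i \<le> w j)" if "i \<in> {1..p}" for i
    using that by (subst eq_commute) (auto simp: w_def Max_eq_iff)
  then have "{i\<in>{1..p}. x i = Max (x ` {1..p})} = {i\<in>{1..p}. \<forall>j\<in>{1..p}. w i \<le> w j}"
    by blast
  then have part2: "int p \<le> S + 1 + int (card {i\<in>{1..p}. x i = Max (x ` {1..p})})"
    using card_minimizers_ge assms(2) by (simp add: S_def)
  have "int p \<le> 3 * S + 2"
    using sum_ge_third assms(2) by (simp add: S_def)
  then have part3: "\<lceil>real p / 3\<rceil> \<le> S + 1"
    by (simp add: ceiling_le_iff)
  show ?thesis
    using part1 part2 part3 sum_x K by auto
qed

end
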